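(* For any $w, w' \in \mathcal{C}\langle A \rangle$ and any integer $M \ge 1$, \[ Z^{\mathcal{S}, \ast}_{q, M}(w \ast_{\hbar} w')=Z^{\mathcal{S}, \ast}_{q, M}(w)\, Z^{\mathcal{S}, \ast}_{q, M}(w'). \]
   Context: Let $\mathcal{C}=\mathbb{Q}[\hbar]$ with $\hbar$ a formal variable, and let $\mathfrak{H}=\mathcal{C}\langle a,b\rangle$ be the non-commutative polynomial ring in $a,b$ over $\mathcal{C}$. For $k\ge 1$ put $g_k=ba^k$. Let $A=\{\hbar b\}\cup\{ba^k\mid k\ge 1\}$, let $\mathcal{C}\langle A\rangle$ be the $\mathcal{C}$-subalgebra of $\mathfrak{H}$ generated by $1$ and $A$, and let $\mathfrak{z}$ be the $\mathcal{C}$-span of $A$. Fix $q\in\mathbb{C}$ with $0<|q|<1$ and regard $\mathbb{C}$ as a $\mathcal{C}$-module with $\hbar$ acting as multiplication by $1-q$. Let $[m]=(1-q^m)/(1-q)$. For $m\ge 1$ let $F_q(m;\cdot):\mathfrak{z}\to\mathbb{C}$ be the $\mathcal{C}$-linear map with $F_q(m;\hbar b)=1-q$ and $F_q(m;g_k)=q^{km}/[m]^k$ for $k\ge1$. For $M\ge 1$ let $Z_{q,M}:\mathcal{C}\langle A\rangle\to\mathbb{C}$ be the $\mathcal{C}$-linear map with $Z_{q,M}(1)=1$ and $Z_{q,M}(u_1\cdots u_r)=\sum_{0<m_1<\cdots<m_r<M}\prod_{i=1}^r F_q(m_i;u_i)$ for $u_1,\dots,u_r\in A$. Let $\circ_\hbar:\mathfrak{z}\times\mathfrak{z}\to\mathfrak{z}$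 be the symmetric $\mathcal{C}$-bilinear map with $(\hbar b)\circ_\hbar(\hbar b)=\hbar\cdot \hbar b$, $(\hbar b)\circ_\hbar g_k=\hbar g_k$, $g_k\circ_\hbar g_l=g_{k+l}$ ($k,l\ge1$). The harmonic product $\ast_\hbar$ on $\mathcal{C}\langle A\rangle$ is the $\mathcal{C}$-bilinear product determined by $w\ast_\hbar 1=1\ast_\hbar w=w$ and $(wu)\ast_\hbar(w'v)=(w\ast_\hbar w'v)u+(wu\ast_\hbar w')v+(w\ast_\hbar w')(u\circ_\hbar v)$ for $w,w'\in\mathcal{C}\langle A\rangle$, $u,v\in A$. Let $\psi^\ast$ be the $\mathcal{C}$-algebra anti-involution of $\mathcal{C}\langle A\rangle$ with $\psi^\ast(\hbar b)=\hbar b$ and $\psi^\ast(ba^k)=b(-a)^k$ for $k\ge1$. Define the $\mathcal{C}$-linear map $w^{\mathcal{S},\ast}_\hbar:\mathcal{C}\langle A\rangle\to\mathcal{C}\langle A\rangle$ by $w^{\mathcal{S},\ast}_\hbar(1)=1$ and $w^{\mathcal{S},\ast}_\hbar(u_1\cdots u_r)=\sum_{i=0}^r (u_1\cdots u_i)\ast_\hbar \psi^\ast(u_{i+1}\cdots u_r)$ for $r\ge1$, $u_1,\dots,u_r\in A$, and set $Z^{\mathcal{S},\ast}_{q,M}=Z_{q,M}\circ w^{\mathcal{S},\ast}_\hbar$. *)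

theory Defs
  imports Complex_Main "HOL-Library.Poly_Mapping" "HOL-Computational_Algebra.Polynomial"
begin

text \<open>Coefficient ring C = Q[hbar] is rat poly; hbar = [:0,1:].
  The alphabet A is encoded by natural numbers: letter 0 stands for hbar*b,
  letter k (k >= 1) stands for g_k = b a^k.  C<A> is the free C-module on
  words over A (nat list), represented as finitely supported maps.\<close>

type_synonym CA = "nat list \<Rightarrow>\<^sub>0 rat poly"

definition hbar :: "rat poly" where "hbar = [:0, 1:]"

definition mono :: "nat list \<Rightarrow> CA" where
  "mono u = Poly_Mapping.single u 1"

definition scaleC :: "rat poly \<Rightarrow> CA \<Rightarrow> CA" where
  "scaleC c x = Poly_Mapping.map (\<lambda>a. c * a) x"

definition linext :: "(nat list \<Rightarrow> CA) \<Rightarrow> CA \<Rightarrow> CA" where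
  "linext f x = (\<Sum>u\<in>Poly_Mapping.keys x. scaleC (Poly_Mapping.lookup x u) (f u))"

definition bilinext :: "(nat list \<Rightarrow> nat list \<Rightarrow> CA) \<Rightarrow> CA \<Rightarrow> CA \<Rightarrow> CA" where
  "bilinext f x y = (\<Sum>u\<in>Poly_Mapping.keys x. \<Sum>v\<in>Poly_Mapping.keys y. scaleC (Poly_Mapping.lookup x u * Poly_Mapping.lookup y v) (f u v))"

definition append_right :: "CA \<Rightarrow> nat list \<Rightarrow> CA" where
  "append_right x s = linext (\<lambda>u. mono (u @ s)) x"

text \<open>u circ_hbar v as an element of z: coefficient times a letter.\<close>
definition circ_coeff :: "nat \<Rightarrow> nat \<Rightarrow> rat poly" where
  "circ_coeff u v = (if u = 0 \<or> v = 0 then hbar else 1)"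

definition circ_letter :: "nat \<Rightarrow> nat \<Rightarrow> nat" where
  "circ_letter u v = u + v"

text \<open>Harmonic product of two words, computed on the reversed words
  (so that the recursion peels off the last letters).\<close>
fun harm_rev :: "nat list \<Rightarrow> nat list \<Rightarrow> CA" where
  "harm_rev [] y = mono (rev y)"
| "harm_rev (u # x) [] = mono (rev (u # x))"
| "harm_rev (u # x) (v # y) =
     append_right (harm_rev x (v # y)) [u]
   + append_right (harm_rev (u # x) y) [v]
   + scaleC (circ_coeff u v) (append_right (harm_rev x y) [circ_letter u v])"

definition harm_word :: "nat list \<Rightarrow> nat list \<Rightarrow> CA" where
  "harm_word x y = harm_rev (rev x) (rev y)"

definition harm :: "CA \<Rightarrow> CA \<Rightarrow> CA" where
  "harm x y = bilinext harm_word x y"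

definition psi_star :: "CA \<Rightarrow> CA" where
  "psi_star x = linext (\<lambda>u. scaleC ((-1) ^ sum_list u) (mono (rev u))) x"

definition wS_word :: "nat list \<Rightarrow> CA" where
  "wS_word us = (if us = [] then mono []
     else (\<Sum>i\<in>{0..length us}. harm (mono (take i us)) (psi_star (mono (drop i us)))))"

definition wS :: "CA \<Rightarrow> CA" where
  "wS x = linext wS_word x"

definition qint :: "complex \<Rightarrow> nat \<Rightarrow> complex" where
  "qint q m = (1 - q ^ m) / (1 - q)"

definition Fq :: "complex \<Rightarrow> nat \<Rightarrow> nat \<Rightarrow> complex" where
  "Fq q m k = (if k = 0 then 1 - q else q ^ (k * m) / (qint q m) ^ k)"

definition evalC :: "complex \<Rightarrow> rat poly \<Rightarrow> complex" where
  "evalC q c = poly (map_poly of_rat c) (1 - q)"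

definition Zq_word :: "complex \<Rightarrow> nat \<Rightarrow> nat list \<Rightarrow> complex" where
  "Zq_word q M us =
     (\<Sum>ms\<in>{ms. length ms = length us \<and> sorted_wrt (<) ms \<and> (\<forall>m\<in>set ms. 0 < m \<and> m < M)}.
        prod_list (map2 (Fq q) ms us))"

definition Zq :: "complex \<Rightarrow> nat \<Rightarrow> CA \<Rightarrow> complex" where
  "Zq q M x = (\<Sum>u\<in>Poly_Mapping.keys x. evalC q (Poly_Mapping.lookup x u) * Zq_word q M u)"

definition ZSq :: "complex \<Rightarrow> nat \<Rightarrow> CA \<Rightarrow> complex" where
  "ZSq q M x = Zq q M (wS x)"

end

theory Submission
  imports Defs
begin

(* Z_{q,M} and Z^S_{q,M} are linear extensions of functions on words, so the identity says
   that the word function underlying Z^S_{q,M} is a character of the harmonic product.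
   Deconcatenation is compatible with the harmonic product (Hoffman's quasi-shuffle
   bialgebra), hence the convolution (f * g)(w) = sum of f(prefix) g(suffix) of two
   characters is again a character. Passing from M to M + 1 convolves Z_{q,M} on the right
   with the function that is F_q(M; u) on a letter u and vanishes on longer words; it is a
   character because F_q(M; u) F_q(M; v) = F_q(M; u circ v). By induction on M, Z_{q,M} is a
   character, and so is w |-> Z_{q,M}(psi*(w)), with the convolution on the left. Finally
   Z^S_{q,M} is the convolution of these two, because Z_{q,M} is a character. *)

lemma evalC_pCons: "evalC q (pCons a p) = of_rat a + (1 - q) * evalC q p"
  unfolding evalC_def by (simp add: map_poly_pCons)

lemma evalC_0 [simp]: "evalC q 0 = 0"
  unfolding evalC_def by simp

lemma evalC_1 [simp]: "evalC q 1 = 1"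
  unfolding evalC_def by simp

lemma evalC_add: "evalC q (a + b) = evalC q a + evalC q b"
  by (induction a b rule: poly_induct2) (simp_all add: evalC_pCons algebra_simps of_rat_add)

lemma evalC_smult: "evalC q (smult a p) = of_rat a * evalC q p"
  unfolding evalC_def by (simp add: map_poly_smult of_rat_mult)

lemma evalC_mult: "evalC q (a * b) = evalC q a * evalC q b"
  by (induction a) (simp_all add: evalC_pCons evalC_add evalC_smult mult_pCons_left algebra_simps)

lemma evalC_uminus: "evalC q (- a) = - evalC q a"
  using evalC_add[of q a "- a"] by (simp add: eq_neg_iff_add_eq_0 add.commute)

lemma evalC_power: "evalC q (a ^ k) = evalC q a ^ k"
  by (induction k) (simp_all add: evalC_mult)

lemma evalC_neg_one_power: "evalC q ((- 1) ^ k) = (- 1) ^ k"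
  by (simp add: evalC_power evalC_uminus)

lemma evalC_hbar: "evalC q hbar = 1 - q"
  unfolding evalC_def hbar_def by (simp add: map_poly_pCons)

definition lin_eval :: "complex \<Rightarrow> (nat list \<Rightarrow> complex) \<Rightarrow> CA \<Rightarrow> complex" where
  "lin_eval q f X = (\<Sum>u\<in>Poly_Mapping.keys X. evalC q (Poly_Mapping.lookup X u) * f u)"

lemma lin_eval_superset:
  assumes "finite S" "Poly_Mapping.keys X \<subseteq> S"
  shows "lin_eval q f X = (\<Sum>u\<in>S. evalC q (Poly_Mapping.lookup X u) * f u)"
  unfolding lin_eval_def
  by (rule sum.mono_neutral_left) (use assms in \<open>auto simp: in_keys_iff\<close>)

lemma lookup_scaleC: "Poly_Mapping.lookup (scaleC c X) u = c * Poly_Mapping.lookup X u"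
  unfolding scaleC_def by (simp add: map.rep_eq when_def)

lemma keys_scaleC_subset: "Poly_Mapping.keys (scaleC c X) \<subseteq> Poly_Mapping.keys X"
  by (auto simp: in_keys_iff lookup_scaleC)

lemma lin_eval_zero [simp]: "lin_eval q f 0 = 0"
  unfolding lin_eval_def by simp

lemma lin_eval_mono [simp]: "lin_eval q f (mono w) = f w"
  unfolding lin_eval_def mono_def by simp

lemma lin_eval_add: "lin_eval q f (X + Y) = lin_eval q f X + lin_eval q f Y"
proof -
  let ?S = "Poly_Mapping.keys X \<union> Poly_Mapping.keys Y"
  have "lin_eval q f (X + Y) = (\<Sum>u\<in>?S. evalC q (Poly_Mapping.lookup (X + Y) u) * f u)"
    by (rule lin_eval_superset) (use keys_add[of X Y] in auto)
  also have "\<dots> = (\<Sum>u\<in>?S. evalC q (Poly_Mapping.lookup X u) * f u)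
                 + (\<Sum>u\<in>?S. evalC q (Poly_Mapping.lookup Y u) * f u)"
    by (simp add: lookup_add evalC_add distrib_right sum.distrib)
  also have "\<dots> = lin_eval q f X + lin_eval q f Y"
    by (simp add: lin_eval_superset[symmetric])
  finally show ?thesis .
qed

lemma lin_eval_scaleC: "lin_eval q f (scaleC c X) = evalC q c * lin_eval q f X"
proof -
  have "lin_eval q f (scaleC c X)
      = (\<Sum>u\<in>Poly_Mapping.keys X. evalC q (Poly_Mapping.lookup (scaleC c X) u) * f u)"
    by (rule lin_eval_superset) (auto simp: keys_scaleC_subset[THEN subsetD])
  then show ?thesis
    by (simp add: lin_eval_def lookup_scaleC evalC_mult sum_distrib_left mult.assoc)
qed

lemma lin_eval_sum: "lin_eval q f (\<Sum>i\<in>I. X i) = (\<Sum>i\<in>I. lin_eval q f (X i))"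
  by (induction I rule: infinite_finite_induct) (simp_all add: lin_eval_add)

lemma lin_eval_linext: "lin_eval q f (linext g X) = lin_eval q (\<lambda>w. lin_eval q f (g w)) X"
  unfolding linext_def lin_eval_def[of q "\<lambda>w. lin_eval q f (g w)"]
  by (simp add: lin_eval_sum lin_eval_scaleC)

lemma lin_eval_append_right: "lin_eval q f (append_right X s) = lin_eval q (\<lambda>w. f (w @ s)) X"
  unfolding append_right_def by (simp add: lin_eval_linext)

lemma lin_eval_fun_add: "lin_eval q (\<lambda>w. f w + g w) X = lin_eval q f X + lin_eval q g X"
  by (simp add: lin_eval_def distrib_left sum.distrib)

lemma lin_eval_fun_cmult: "lin_eval q (\<lambda>w. c * f w) X = c * lin_eval q f X"
  by (simp add: lin_eval_def sum_distrib_left algebra_simps)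

lemma lin_eval_fun_multc: "lin_eval q (\<lambda>w. f w * c) X = lin_eval q f X * c"
  by (simp add: lin_eval_def sum_distrib_right mult.assoc)

(* A function h on pairs of words stands for a linear form on C<A> \<otimes> C<A>;
   lin_eval2 q h X Y is its value at X \<otimes> Y. *)
definition lin_eval2 ::
    "complex \<Rightarrow> (nat list \<Rightarrow> nat list \<Rightarrow> complex) \<Rightarrow> CA \<Rightarrow> CA \<Rightarrow> complex" where
  "lin_eval2 q h X Y = lin_eval q (\<lambda>p. lin_eval q (h p) Y) X"

lemma lin_eval2_add_right: "lin_eval2 q h P (X + Y) = lin_eval2 q h P X + lin_eval2 q h P Y"
  unfolding lin_eval2_def by (simp add: lin_eval_add lin_eval_fun_add)

lemma lin_eval2_scaleC_right: "lin_eval2 q h P (scaleC c X) = evalC q c * lin_eval2 q h P X"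
  unfolding lin_eval2_def by (simp add: lin_eval_scaleC lin_eval_fun_cmult)

lemma lin_eval2_append_right:
  "lin_eval2 q h P (append_right X s) = lin_eval2 q (\<lambda>p w. h p (w @ s)) P X"
  unfolding lin_eval2_def by (simp add: lin_eval_append_right)

lemma lin_eval2_mono_right [simp]: "lin_eval2 q h P (mono s) = lin_eval q (\<lambda>p. h p s) P"
  unfolding lin_eval2_def by simp

lemma lin_eval2_tensor: "lin_eval2 q (\<lambda>p s. f p * g s) X Y = lin_eval q f X * lin_eval q g Y"
  unfolding lin_eval2_def by (simp add: lin_eval_fun_cmult lin_eval_fun_multc)

lemma lin_eval_harm:
  "lin_eval q f (harm X Y) = lin_eval2 q (\<lambda>p s. lin_eval q f (harm_word p s)) X Y"
proof -
  have "lin_eval q f (harm X Y) =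
      (\<Sum>u\<in>Poly_Mapping.keys X. \<Sum>v\<in>Poly_Mapping.keys Y. evalC q (Poly_Mapping.lookup X u)
         * (evalC q (Poly_Mapping.lookup Y v) * lin_eval q f (harm_word u v)))"
    unfolding harm_def bilinext_def by (simp add: lin_eval_sum lin_eval_scaleC evalC_mult mult_ac)
  then show ?thesis
    by (simp add: lin_eval2_def lin_eval_def[of q _ X] lin_eval_def[of q _ Y] sum_distrib_left)
qed

lemma harm_word_Nil_left [simp]: "harm_word [] y = mono y"
  unfolding harm_word_def by simp

lemma harm_word_Nil_right [simp]: "harm_word x [] = mono x"
proof -
  have "harm_rev r [] = mono (rev r)" for r
    by (cases r) auto
  then show ?thesis
    by (simp add: harm_word_def)
qed

lemma harm_word_snoc_snoc:
  "harm_word (x @ [u]) (y @ [v]) =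
     append_right (harm_word x (y @ [v])) [u] + append_right (harm_word (x @ [u]) y) [v]
   + scaleC (circ_coeff u v) (append_right (harm_word x y) [u + v])"
  unfolding harm_word_def by (simp add: circ_letter_def)

definition harm_character :: "complex \<Rightarrow> (nat list \<Rightarrow> complex) \<Rightarrow> bool" where
  "harm_character q f \<longleftrightarrow> (\<forall>a b. lin_eval q f (harm_word a b) = f a * f b)"

lemma lin_eval_harm_character:
  assumes "harm_character q f"
  shows "lin_eval q f (harm X Y) = lin_eval q f X * lin_eval q f Y"
  using assms unfolding harm_character_def lin_eval_harm by (simp add: lin_eval2_tensor)

definition counit :: "nat list \<Rightarrow> complex" where
  "counit w = of_bool (w = [])"

lemma lin_eval_counit_append_right: "lin_eval q counit (append_right X [u]) = 0"
  unfolding lin_eval_append_right by (simp add: counit_def lin_eval_def)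

lemma harm_character_counit: "harm_character q counit"
  unfolding harm_character_def
proof (intro allI)
  fix a b :: "nat list"
  show "lin_eval q counit (harm_word a b) = counit a * counit b"
  proof (cases a rule: rev_cases)
    case (snoc x u)
    then show ?thesis
      by (cases b rule: rev_cases)
         (simp_all add: harm_word_snoc_snoc lin_eval_add lin_eval_scaleC
           lin_eval_counit_append_right counit_def)
  qed (simp add: counit_def)
qed

definition letter_fun :: "(nat \<Rightarrow> complex) \<Rightarrow> nat list \<Rightarrow> complex" where
  "letter_fun F w = (case w of [] \<Rightarrow> 1 | [u] \<Rightarrow> F u | _ \<Rightarrow> 0)"

lemma letter_fun_Nil [simp]: "letter_fun F [] = 1"
  by (simp add: letter_fun_def)

lemma letter_fun_Cons: "letter_fun F (u # w) = F u * counit w"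
  by (cases w) (simp_all add: letter_fun_def counit_def)

lemma letter_fun_snoc: "letter_fun F (w @ [u]) = F u * counit w"
  by (cases w) (simp_all add: letter_fun_def counit_def split: list.split)

definition circ_multiplicative :: "complex \<Rightarrow> (nat \<Rightarrow> complex) \<Rightarrow> bool" where
  "circ_multiplicative q F \<longleftrightarrow> (\<forall>u v. F u * F v = evalC q (circ_coeff u v) * F (u + v))"

lemma harm_character_letter_fun:
  assumes "circ_multiplicative q F"
  shows "harm_character q (letter_fun F)"
  unfolding harm_character_def
proof (intro allI)
  fix a b :: "nat list"
  show "lin_eval q (letter_fun F) (harm_word a b) = letter_fun F a * letter_fun F b"
  proof (cases a rule: rev_cases)
    case (snoc x u)
    show ?thesis
    proof (cases b rule: rev_cases)
      case (snoc y v)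
      have counit: "lin_eval q counit (harm_word a b) = counit a * counit b" for a b
        using harm_character_counit unfolding harm_character_def by blast
      have "lin_eval q (letter_fun F) (harm_word (x @ [u]) (y @ [v]))
          = F u * (counit x * counit (y @ [v])) + F v * (counit (x @ [u]) * counit y)
            + evalC q (circ_coeff u v) * (F (u + v) * (counit x * counit y))"
        by (simp add: harm_word_snoc_snoc lin_eval_add lin_eval_scaleC lin_eval_append_right
            letter_fun_snoc lin_eval_fun_cmult counit)
      also have "\<dots> = letter_fun F (x @ [u]) * letter_fun F (y @ [v])"
        using assms unfolding circ_multiplicative_def by (simp add: counit_def letter_fun_snoc)
      finally show ?thesis
        using \<open>a = x @ [u]\<close> snoc by simp
    qed (simp add: letter_fun_def)
  qed (simp add: letter_fun_def)
qed

definition deconc :: "(nat list \<Rightarrow> nat list \<Rightarrow> complex) \<Rightarrow> nat list \<Rightarrow> complex" where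
  "deconc h w = (\<Sum>i\<in>{0..length w}. h (take i w) (drop i w))"

lemma deconc_snoc: "deconc h (w @ [u]) = deconc (\<lambda>p s. h p (s @ [u])) w + h (w @ [u]) []"
  by (simp add: deconc_def sum.atLeast0_atMost_Suc)

lemma lin_eval_deconc_append_right:
  "lin_eval q (deconc h) (append_right X [u])
     = lin_eval q (deconc (\<lambda>p s. h p (s @ [u]))) X + lin_eval q (\<lambda>p. h (p @ [u]) []) X"
  by (simp add: lin_eval_append_right deconc_snoc lin_eval_fun_add)

lemma lin_eval_deconc_harm_snoc_snoc:
  "lin_eval q (deconc h) (harm_word (x @ [u]) (y @ [v])) =
     lin_eval q (deconc (\<lambda>p s. h p (s @ [u]))) (harm_word x (y @ [v]))
   + lin_eval q (deconc (\<lambda>p s. h p (s @ [v]))) (harm_word (x @ [u]) y)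
   + evalC q (circ_coeff u v) * lin_eval q (deconc (\<lambda>p s. h p (s @ [u + v]))) (harm_word x y)
   + lin_eval q (\<lambda>p. h p []) (harm_word (x @ [u]) (y @ [v]))"
  unfolding harm_word_snoc_snoc[of x u y v] lin_eval_add lin_eval_scaleC
    lin_eval_deconc_append_right
  by (simp add: lin_eval_append_right algebra_simps del: append_assoc)

definition split_term :: "complex \<Rightarrow> (nat list \<Rightarrow> nat list \<Rightarrow> complex) \<Rightarrow>
    nat list \<Rightarrow> nat list \<Rightarrow> nat \<Rightarrow> nat \<Rightarrow> complex" where
  "split_term q h a b i j =
     lin_eval2 q h (harm_word (take i a) (take j b)) (harm_word (drop i a) (drop j b))"

definition harm_splits ::
    "complex \<Rightarrow> (nat list \<Rightarrow> nat list \<Rightarrow> complex) \<Rightarrow> nat list \<Rightarrow> nat list \<Rightarrow> complex" where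
  "harm_splits q h a b = (\<Sum>i\<in>{0..length a}. \<Sum>j\<in>{0..length b}. split_term q h a b i j)"

lemma split_term_snoc_snoc:
  assumes "i \<le> length x" "j \<le> length y"
  shows "split_term q h (x @ [u]) (y @ [v]) i j =
      split_term q (\<lambda>p s. h p (s @ [u])) x (y @ [v]) i j
    + split_term q (\<lambda>p s. h p (s @ [v])) (x @ [u]) y i j
    + evalC q (circ_coeff u v) * split_term q (\<lambda>p s. h p (s @ [u + v])) x y i j"
  using assms unfolding split_term_def
  by (simp add: harm_word_snoc_snoc lin_eval2_add_right lin_eval2_scaleC_right
      lin_eval2_append_right del: append_assoc)

lemma split_term_last_column:
  assumes "i \<le> length x"
  shows "split_term q h (x @ [u]) b i (length b) =
    split_term q (\<lambda>p s. h p (s @ [u])) x b i (length b)"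
  using assms unfolding split_term_def by simp

lemma split_term_last_row:
  assumes "j \<le> length y"
  shows "split_term q h a (y @ [v]) (length a) j =
    split_term q (\<lambda>p s. h p (s @ [v])) a y (length a) j"
  using assms unfolding split_term_def by simp

lemma split_term_corner:
  "split_term q h a b (length a) (length b) = lin_eval q (\<lambda>p. h p []) (harm_word a b)"
  unfolding split_term_def by simp

lemma harm_splits_snoc_snoc:
  "harm_splits q h (x @ [u]) (y @ [v]) =
     harm_splits q (\<lambda>p s. h p (s @ [u])) x (y @ [v])
   + harm_splits q (\<lambda>p s. h p (s @ [v])) (x @ [u]) y
   + evalC q (circ_coeff u v) * harm_splits q (\<lambda>p s. h p (s @ [u + v])) x y
   + lin_eval q (\<lambda>p. h p []) (harm_word (x @ [u]) (y @ [v]))"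
proof -
  define n m where "n = length x" and "m = length y"
  define T A B C where
    "T = split_term q h (x @ [u]) (y @ [v])" and
    "A = split_term q (\<lambda>p s. h p (s @ [u])) x (y @ [v])" and
    "B = split_term q (\<lambda>p s. h p (s @ [v])) (x @ [u]) y" and
    "C = split_term q (\<lambda>p s. h p (s @ [u + v])) x y"
  let ?c = "evalC q (circ_coeff u v)"
  have inner: "(\<Sum>i\<in>{0..n}. \<Sum>j\<in>{0..m}. T i j) =
      (\<Sum>i\<in>{0..n}. \<Sum>j\<in>{0..m}. A i j) + (\<Sum>i\<in>{0..n}. \<Sum>j\<in>{0..m}. B i j)
    + ?c * (\<Sum>i\<in>{0..n}. \<Sum>j\<in>{0..m}. C i j)"
    unfolding T_def A_def B_def C_def n_def m_def
    by (simp add: split_term_snoc_snoc sum.distrib sum_distrib_left)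
  have column: "T i (Suc m) = A i (Suc m)" if "i \<le> n" for i
    using split_term_last_column[of i x q h u "y @ [v]"] that
    unfolding T_def A_def n_def m_def by simp
  have row: "T (Suc n) j = B (Suc n) j" if "j \<le> m" for j
    using split_term_last_row[of j y q h "x @ [u]" v] that
    unfolding T_def B_def n_def m_def by simp
  have corner: "T (Suc n) (Suc m) = lin_eval q (\<lambda>p. h p []) (harm_word (x @ [u]) (y @ [v]))"
    using split_term_corner[of q h "x @ [u]" "y @ [v]"] unfolding T_def n_def m_def by simp
  have "harm_splits q h (x @ [u]) (y @ [v]) = (\<Sum>i\<in>{0..n}. \<Sum>j\<in>{0..m}. T i j)
      + (\<Sum>i\<in>{0..n}. T i (Suc m)) + (\<Sum>j\<in>{0..m}. T (Suc n) j) + T (Suc n) (Suc m)"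
    unfolding harm_splits_def T_def n_def m_def by (simp add: sum.atLeast0_atMost_Suc sum.distrib)
  moreover have "harm_splits q (\<lambda>p s. h p (s @ [u])) x (y @ [v])
      = (\<Sum>i\<in>{0..n}. \<Sum>j\<in>{0..m}. A i j) + (\<Sum>i\<in>{0..n}. T i (Suc m))"
    unfolding harm_splits_def A_def n_def m_def
    by (simp add: sum.atLeast0_atMost_Suc sum.distrib column[unfolded A_def n_def m_def])
  moreover have "harm_splits q (\<lambda>p s. h p (s @ [v])) (x @ [u]) y
      = (\<Sum>i\<in>{0..n}. \<Sum>j\<in>{0..m}. B i j) + (\<Sum>j\<in>{0..m}. T (Suc n) j)"
    unfolding harm_splits_def B_def n_def m_def
    by (simp add: sum.atLeast0_atMost_Suc row[unfolded B_def n_def m_def])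
  moreover have "harm_splits q (\<lambda>p s. h p (s @ [u + v])) x y = (\<Sum>i\<in>{0..n}. \<Sum>j\<in>{0..m}. C i j)"
    unfolding harm_splits_def C_def n_def m_def ..
  ultimately show ?thesis
    using inner corner by simp
qed

(* Deconcatenation is a morphism for the harmonic product, paired with an arbitrary h. *)
lemma lin_eval_deconc_harm_word:
  "lin_eval q (deconc h) (harm_word a b) = harm_splits q h a b"
proof (induction a arbitrary: b h rule: rev_induct)
  case Nil
  show ?case
    by (simp add: harm_splits_def split_term_def deconc_def)
next
  case (snoc u x)
  note IH_x = snoc.IH
  show ?case
  proof (induction b arbitrary: h rule: rev_induct)
    case Nil
    show ?case
      by (simp add: harm_splits_def split_term_def deconc_def del: append_assoc)
  next
    case (snoc v y)
    then show ?case
      by (simp add: lin_eval_deconc_harm_snoc_snoc harm_splits_snoc_snoc IH_x del: append_assoc)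
  qed
qed

definition conv :: "(nat list \<Rightarrow> complex) \<Rightarrow> (nat list \<Rightarrow> complex) \<Rightarrow> nat list \<Rightarrow> complex" where
  "conv f g = deconc (\<lambda>p s. f p * g s)"

lemma harm_character_conv:
  assumes "harm_character q f" "harm_character q g"
  shows "harm_character q (conv f g)"
  unfolding harm_character_def
proof (intro allI)
  fix a b
  have "lin_eval q (conv f g) (harm_word a b) = (\<Sum>i\<in>{0..length a}. \<Sum>j\<in>{0..length b}.
      (f (take i a) * f (take j b)) * (g (drop i a) * g (drop j b)))"
    using assms unfolding conv_def lin_eval_deconc_harm_word harm_splits_def split_term_def
    by (simp add: lin_eval2_tensor harm_character_def)
  also have "\<dots> = conv f g a * conv f g b"
    unfolding conv_def deconc_def sum_product by (simp add: mult_ac)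
  finally show "lin_eval q (conv f g) (harm_word a b) = conv f g a * conv f g b" .
qed

lemma conv_Nil: "conv f g [] = f [] * g []"
  by (simp add: conv_def deconc_def)

lemma conv_letter_fun_right_snoc:
  "conv f (letter_fun F) (w @ [u]) = f (w @ [u]) + f w * F u"
proof -
  have "deconc (\<lambda>p s. f p * letter_fun F (s @ [u])) w
      = (\<Sum>i\<in>{0..length w}. of_bool (i = length w) * (f w * F u))"
    unfolding deconc_def by (rule sum.cong) (auto simp: letter_fun_snoc counit_def)
  then show ?thesis
    by (simp add: conv_def deconc_snoc)
qed

lemma conv_letter_fun_left_Cons:
  "conv (letter_fun F) g (u # w) = g (u # w) + F u * g w"
proof -
  have "(\<Sum>i\<in>{0..length w}. letter_fun F (u # take i w) * g (drop i w))
      = (\<Sum>i\<in>{0..length w}. of_bool (i = 0) * (F u * g w))"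
    by (rule sum.cong) (auto simp: letter_fun_Cons counit_def)
  then show ?thesis
    unfolding conv_def deconc_def length_Cons sum.atLeast0_atMost_Suc_shift by simp
qed

definition incr_seqs :: "nat \<Rightarrow> nat \<Rightarrow> nat list set" where
  "incr_seqs M n = {ms. length ms = n \<and> sorted_wrt (<) ms \<and> (\<forall>m\<in>set ms. 0 < m \<and> m < M)}"

lemma Zq_word_incr_seqs:
  "Zq_word q M us = (\<Sum>ms\<in>incr_seqs M (length us). prod_list (map2 (Fq q) ms us))"
  by (simp add: Zq_word_def incr_seqs_def)

lemma finite_incr_seqs: "finite (incr_seqs M n)"
proof (rule finite_subset)
  show "incr_seqs M n \<subseteq> {ms. set ms \<subseteq> {0..<M} \<and> length ms = n}"
    by (auto simp: incr_seqs_def)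
  show "finite {ms. set ms \<subseteq> {0..<M} \<and> length ms = n}"
    by (rule finite_lists_length_eq) simp
qed

lemma incr_seqs_0: "incr_seqs M 0 = {[]}"
  by (auto simp: incr_seqs_def)

lemma incr_seqs_1_Suc: "incr_seqs 1 (Suc n) = {}"
  by (auto simp: incr_seqs_def length_Suc_conv)

lemma incr_seqs_Suc_Suc:
  assumes "M \<ge> 1"
  shows "incr_seqs (Suc M) (Suc n) = incr_seqs M (Suc n) \<union> (\<lambda>ms. ms @ [M]) ` incr_seqs M n"
proof (intro equalityI subsetI)
  fix ms assume "ms \<in> incr_seqs (Suc M) (Suc n)"
  then have len: "length ms = Suc n" and sorted: "sorted_wrt (<) ms"
    and bounds: "\<forall>m\<in>set ms. 0 < m \<and> m < Suc M"
    by (auto simp: incr_seqs_def)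
  obtain xs l where ms: "ms = xs @ [l]"
    using len by (cases ms rule: rev_cases) auto
  show "ms \<in> incr_seqs M (Suc n) \<union> (\<lambda>ms. ms @ [M]) ` incr_seqs M n"
  proof (cases "l = M")
    case True
    then have "xs \<in> incr_seqs M n"
      using len sorted bounds unfolding ms incr_seqs_def by (auto simp: sorted_wrt_append)
    then show ?thesis
      using True ms by auto
  next
    case False
    then have "ms \<in> incr_seqs M (Suc n)"
      using len sorted bounds unfolding ms incr_seqs_def
      by (auto simp: sorted_wrt_append less_Suc_eq)
    then show ?thesis
      by auto
  qed
next
  fix ms assume "ms \<in> incr_seqs M (Suc n) \<union> (\<lambda>ms. ms @ [M]) ` incr_seqs M n"
  then show "ms \<in> incr_seqs (Suc M) (Suc n)"
    using assms by (auto simp: incr_seqs_def sorted_wrt_append less_Suc_eq)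
qed

lemma Zq_word_Nil [simp]: "Zq_word q M [] = 1"
  by (simp add: Zq_word_incr_seqs incr_seqs_0)

lemma Zq_word_1: "Zq_word q 1 = counit"
proof
  fix w
  show "Zq_word q 1 w = counit w"
    by (cases w)
       (simp_all add: counit_def Zq_word_incr_seqs incr_seqs_0 incr_seqs_1_Suc del: One_nat_def)
qed

lemma Zq_word_Suc_snoc:
  assumes "M \<ge> 1"
  shows "Zq_word q (Suc M) (w @ [u]) = Zq_word q M (w @ [u]) + Zq_word q M w * Fq q M u"
proof -
  let ?term = "\<lambda>us ms. prod_list (map2 (Fq q) ms us)"
  have disjoint: "incr_seqs M (Suc (length w)) \<inter> (\<lambda>ms. ms @ [M]) ` incr_seqs M (length w) = {}"
    by (auto simp: incr_seqs_def)
  have inj: "inj_on (\<lambda>ms. ms @ [M]) (incr_seqs M (length w))"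
    by (auto simp: inj_on_def)
  have "Zq_word q (Suc M) (w @ [u]) = (\<Sum>ms\<in>incr_seqs M (Suc (length w)). ?term (w @ [u]) ms)
      + (\<Sum>ms\<in>(\<lambda>ms. ms @ [M]) ` incr_seqs M (length w). ?term (w @ [u]) ms)"
    unfolding Zq_word_incr_seqs using incr_seqs_Suc_Suc[OF assms, of "length w"] disjoint
    by (simp add: sum.union_disjoint finite_incr_seqs)
  also have "(\<Sum>ms\<in>(\<lambda>ms. ms @ [M]) ` incr_seqs M (length w). ?term (w @ [u]) ms)
      = (\<Sum>ms\<in>incr_seqs M (length w). ?term w ms * Fq q M u)"
    by (simp add: sum.reindex[OF inj]) (rule sum.cong, auto simp: incr_seqs_def)
  finally show ?thesis
    by (simp add: Zq_word_incr_seqs sum_distrib_right)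
qed

lemma Zq_word_Suc_eq_conv:
  assumes "M \<ge> 1"
  shows "Zq_word q (Suc M) = conv (Zq_word q M) (letter_fun (Fq q M))"
proof
  fix w
  show "Zq_word q (Suc M) w = conv (Zq_word q M) (letter_fun (Fq q M)) w"
    by (cases w rule: rev_cases)
       (simp_all add: conv_Nil conv_letter_fun_right_snoc Zq_word_Suc_snoc[OF assms])
qed

lemma circ_multiplicative_Fq: "circ_multiplicative q (Fq q M)"
  unfolding circ_multiplicative_def Fq_def circ_coeff_def
  by (auto simp: power_add add_mult_distrib evalC_hbar)

lemma circ_multiplicative_sign:
  assumes "circ_multiplicative q F"
  shows "circ_multiplicative q (\<lambda>u. (- 1) ^ u * F u)"
  using assms unfolding circ_multiplicative_def by (simp add: power_add mult_ac)

lemma harm_character_Zq_word: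
  assumes "M \<ge> 1"
  shows "harm_character q (Zq_word q M)"
  using assms
proof (induction M rule: nat_induct_at_least)
  case base
  show ?case
    by (simp add: Zq_word_1 harm_character_counit del: One_nat_def)
next
  case (Suc M)
  then show ?case
    by (simp add: Zq_word_Suc_eq_conv harm_character_conv harm_character_letter_fun
        circ_multiplicative_Fq)
qed

definition Zq_twist :: "complex \<Rightarrow> nat \<Rightarrow> nat list \<Rightarrow> complex" where
  "Zq_twist q M v = (- 1) ^ sum_list v * Zq_word q M (rev v)"

lemma Zq_twist_Suc_eq_conv:
  assumes "M \<ge> 1"
  shows "Zq_twist q (Suc M) = conv (letter_fun (\<lambda>u. (- 1) ^ u * Fq q M u)) (Zq_twist q M)"
proof
  fix w
  show "Zq_twist q (Suc M) w = conv (letter_fun (\<lambda>u. (- 1) ^ u * Fq q M u)) (Zq_twist q M) w"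
    by (cases w)
       (simp_all add: conv_Nil conv_letter_fun_left_Cons Zq_twist_def Zq_word_Suc_snoc[OF assms]
         power_add algebra_simps)
qed

lemma harm_character_Zq_twist:
  assumes "M \<ge> 1"
  shows "harm_character q (Zq_twist q M)"
  using assms
proof (induction M rule: nat_induct_at_least)
  case base
  have "Zq_twist q 1 = counit"
    by (auto simp: Zq_twist_def Zq_word_1 counit_def simp del: One_nat_def)
  then show ?case
    by (simp add: harm_character_counit del: One_nat_def)
next
  case (Suc M)
  then show ?case
    by (simp add: Zq_twist_Suc_eq_conv harm_character_conv harm_character_letter_fun
        circ_multiplicative_sign circ_multiplicative_Fq)
qed

lemma lin_eval_psi_star_mono: "lin_eval q f (psi_star (mono v)) = (- 1) ^ sum_list v * f (rev v)"
  unfolding psi_star_def lin_eval_linext by (simp add: lin_eval_scaleC evalC_neg_one_power)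

lemma Zq_eq_lin_eval: "Zq q M X = lin_eval q (Zq_word q M) X"
  unfolding Zq_def lin_eval_def ..

lemma Zq_wS_word:
  assumes "M \<ge> 1"
  shows "Zq q M (wS_word w) = conv (Zq_word q M) (Zq_twist q M) w"
proof (cases "w = []")
  case True
  then show ?thesis
    by (simp add: wS_word_def Zq_eq_lin_eval conv_Nil Zq_twist_def)
next
  case False
  then show ?thesis
    by (simp add: wS_word_def Zq_eq_lin_eval conv_def deconc_def Zq_twist_def lin_eval_sum
        lin_eval_harm_character[OF harm_character_Zq_word[OF assms]] lin_eval_psi_star_mono)
qed

lemma ZSq_eq_lin_eval_conv:
  assumes "M \<ge> 1"
  shows "ZSq q M X = lin_eval q (conv (Zq_word q M) (Zq_twist q M)) X"
  unfolding ZSq_def wS_def Zq_eq_lin_eval lin_eval_linext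
  using Zq_wS_word[OF assms] by (simp add: Zq_eq_lin_eval)

theorem proposition4p1:
  fixes q :: complex and M :: nat and w w' :: CA
  assumes "0 < norm q" and "norm q < 1" and "M \<ge> 1"
  shows "ZSq q M (harm w w') = ZSq q M w * ZSq q M w'"
proof -
  have "harm_character q (conv (Zq_word q M) (Zq_twist q M))"
    using \<open>M \<ge> 1\<close> by (intro harm_character_conv harm_character_Zq_word harm_character_Zq_twist)
  then show ?thesis
    unfolding ZSq_eq_lin_eval_conv[OF \<open>M \<ge> 1\<close>] by (rule lin_eval_harm_character)
qed

end
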